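(* Consider a Zosin–Khuller type instance built from $H=(\mathcal{A}\uplus\mathcal{B},E_H)$, $K$, $\{M_t\}_{t\in K}$ with parameters $d,d',k,s$ as in the context. Let $\alpha\ge 1$ be a real number. Suppose that for every $u\in\mathcal{A}$ there is a set $J_u\subseteq K$ with $|J_u|\le d/\alpha$ such that for every edge $\{u,v\}\in E_H$ (with $v\in\mathcal{B}$) we have $|K_v\setminus J_u|\le d'/\alpha$. Then every subgraph of $G$ that contains a directed path from $r$ to every terminal $t\in K$ has total cost at least $\alpha|\mathcal{B}|/s$.
   Context: A Zosin–Khuller type instance is specified by: (P1) a bipartite graph $H=(\mathcal{A}\uplus\mathcal{B},E_H)$ with $|\mathcal{A}|\le|\mathcal{B}|$, every vertex of $\mathcal{A}$ of degree $d$ and every vertex of $\mathcal{B}$ of degree $d'$; (P2) a set $K$ of $k$ terminals and a partition $\{M_t\}_{t\in K}$ of $E_H$ into $k$ matchings, each of size $s$ (so $sk=d|\mathcal{A}|=d'|\mathcal{B}|=|E_H|$; edges in $M_t$ are said to have color $t$); (P3) for $v\in\mathcal{B}$, $K_v=\{t\in K: v \text{ is matched in } M_t\}$, so $|K_v|=d'$. The DST instance is the directed graph $G$ with vertex set $\{r\}\uplus\mathcal{A}\uplus\mathcal{B}\uplus\mathcal{B}'\uplus K$, where $\mathcal{B}'$ is a disjoint copy of $\mathcal{B}$ via a bijection $\pi:\mathcal{B}\to\mathcal{B}'$, and edges: $E_1=\{(r,u):u\in\mathcal{A}\}$ each of cost $|\mathcal{B}|/|\mathcal{A}|$; $E_2=\{(u,v):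 \{u,v\}\in E_H, u\in\mathcal{A}, v\in\mathcal{B}\}$ each of cost $0$; $E_3=\{(v,\pi(v)):v\in\mathcal{B}\}$ each of cost $1$; $E_4=\{(\pi(v),t): v\in\mathcal{B}, t\in K_v\}$ each of cost $0$. The root is $r$ and the terminal set is $K$. *)

theory Defs
  imports Main "HOL.Real"
begin

text \<open>Vertices of the DST instance G: the root r, copies of A, B, B' (via pi = VBp) and K.\<close>
datatype ('a, 'b, 't) zk_vertex = Root | VA 'a | VB 'b | VBp 'b | VT 't

definition is_matching :: "('a \<times> 'b) set \<Rightarrow> bool" where
  "is_matching M \<longleftrightarrow> (\<forall>(u, v) \<in> M. \<forall>(u', v') \<in> M. (u = u' \<longleftrightarrow> v = v'))"

definition zk_instance ::
  "'a set \<Rightarrow> 'b set \<Rightarrow> ('a \<times> 'b) set \<Rightarrow> nat \<Rightarrow> nat \<Rightarrow> 't set \<Rightarrow> nat \<Rightarrow>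
   ('t \<Rightarrow> ('a \<times> 'b) set) \<Rightarrow> nat \<Rightarrow> bool" where
  "zk_instance A B EH d d' K k M s \<longleftrightarrow>
     finite A \<and> finite B \<and> card A \<le> card B \<and> EH \<subseteq> A \<times> B \<and>
     (\<forall>u \<in> A. card {v. (u, v) \<in> EH} = d) \<and>
     (\<forall>v \<in> B. card {u. (u, v) \<in> EH} = d') \<and>
     finite K \<and> card K = k \<and>
     (\<forall>t \<in> K. M t \<subseteq> EH \<and> is_matching (M t) \<and> card (M t) = s) \<and>
     (\<forall>t \<in> K. \<forall>t' \<in> K. t \<noteq> t' \<longrightarrow> M t \<inter> M t' = {}) \<and>
     (\<Union>t \<in> K. M t) = EH"

definition zk_Kv :: "'t set \<Rightarrow> ('t \<Rightarrow> ('a \<times> 'b) set) \<Rightarrow> 'b \<Rightarrow> 't set" where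
  "zk_Kv K M v = {t \<in> K. \<exists>u. (u, v) \<in> M t}"

definition zk_edges ::
  "'a set \<Rightarrow> 'b set \<Rightarrow> ('a \<times> 'b) set \<Rightarrow> 't set \<Rightarrow> ('t \<Rightarrow> ('a \<times> 'b) set) \<Rightarrow>
   (('a, 'b, 't) zk_vertex \<times> ('a, 'b, 't) zk_vertex) set" where
  "zk_edges A B EH K M =
     {(Root, VA u) | u. u \<in> A}
   \<union> {(VA u, VB v) | u v. (u, v) \<in> EH \<and> u \<in> A \<and> v \<in> B}
   \<union> {(VB v, VBp v) | v. v \<in> B}
   \<union> {(VBp v, VT t) | v t. v \<in> B \<and> t \<in> zk_Kv K M v}"

fun zk_cost :: "'a set \<Rightarrow> 'b set \<Rightarrow>
    ('a, 'b, 't) zk_vertex \<times> ('a, 'b, 't) zk_vertex \<Rightarrow> real" where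
  "zk_cost A B (Root, VA u) = real (card B) / real (card A)"
| "zk_cost A B (VB v, VBp v') = 1"
| "zk_cost A B _ = 0"

end

theory Submission
  imports Defs
begin

text \<open>Every terminal is reached along a path r, u, v, \<pi>(v), t, so the terminals are covered by
  the sets \<open>J\<^sub>u\<close> of the bought vertices \<open>u \<in> \<A>\<close> together with the sets \<open>K\<^sub>v - J\<^sub>u\<close> of the
  bought edges \<open>(v, \<pi>(v))\<close>, where for each such v one fixes a bought u adjacent to it. Counting
  gives \<open>\<alpha> k \<le> a d + b d'\<close> for a bought vertices of \<open>\<A>\<close> and b bought edges of \<open>E\<^sub>3\<close>, whose cost
  is \<open>a |\<B>|/|\<A>| + b = (a d + b d')/d'\<close> by the double counting \<open>d |\<A>| = d' |\<B>| = s k\<close>.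
  Hence the cost is at least \<open>\<alpha> k / d' = \<alpha> |\<B>| / s\<close>.\<close>

lemma card_left_regular_relation:
  assumes "finite A" "finite B" "R \<subseteq> A \<times> B" "\<forall>u \<in> A. card {v. (u, v) \<in> R} = d"
  shows "card R = d * card A"
proof -
  have "R = (SIGMA u:A. {v. (u, v) \<in> R})"
    using assms(3) by auto
  moreover have "finite {v. (u, v) \<in> R}" for u
    using assms(2,3) by (auto intro: finite_subset)
  ultimately have "card R = (\<Sum>u \<in> A. card {v. (u, v) \<in> R})"
    using assms(1) by (metis card_SigmaI)
  then show ?thesis
    using assms(4) by simp
qed

lemma card_right_regular_relation:
  assumes "finite A" "finite B" "R \<subseteq> A \<times> B" "\<forall>v \<in> B. card {u. (u, v) \<in> R} = d"
  shows "card R = d * card B"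
proof -
  have "card (R\<inverse>) = d * card B"
    using assms by (intro card_left_regular_relation) auto
  moreover have "card (R\<inverse>) = card R"
  proof -
    have "R\<inverse> = prod.swap ` R"
      by force
    then show ?thesis
      by (simp add: card_image)
  qed
  ultimately show ?thesis
    by simp
qed

lemma zk_instance_double_counting:
  assumes "zk_instance A B EH d d' K k M s"
  shows "d * card A = s * k" "d' * card B = s * k"
proof -
  note inst = assms[unfolded zk_instance_def]
  have "finite EH"
    using inst by (meson finite_SigmaI finite_subset)
  then have "finite (M t)" if "t \<in> K" for t
    using that inst by (meson finite_subset)
  then have "card (\<Union>t \<in> K. M t) = (\<Sum>t \<in> K. card (M t))"
    using inst by (intro card_UN_disjoint) auto
  then have "card EH = (\<Sum>t \<in> K. card (M t))"
    using inst by simp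
  also have "\<dots> = s * k"
    using inst by simp
  finally have "card EH = s * k" .
  moreover have "card EH = d * card A"
    using inst by (intro card_left_regular_relation[of A B]) simp_all
  moreover have "card EH = d' * card B"
    using inst by (intro card_right_regular_relation[of A B]) simp_all
  ultimately show "d * card A = s * k" "d' * card B = s * k"
    by simp_all
qed

lemma zk_edge_into_VT_iff:
  "(x, VT t) \<in> zk_edges A B EH K M \<longleftrightarrow> (\<exists>v. x = VBp v \<and> v \<in> B \<and> t \<in> zk_Kv K M v)"
  by (auto simp: zk_edges_def)

lemma zk_edge_into_VBp_iff: "(x, VBp v) \<in> zk_edges A B EH K M \<longleftrightarrow> x = VB v \<and> v \<in> B"
  by (auto simp: zk_edges_def)

lemma zk_edge_into_VB_iff:
  "(x, VB v) \<in> zk_edges A B EH K M \<longleftrightarrow> (\<exists>u. x = VA u \<and> (u, v) \<in> EH \<and> u \<in> A \<and> v \<in> B)"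
  by (auto simp: zk_edges_def)

lemma zk_edge_into_VA_iff: "(x, VA u) \<in> zk_edges A B EH K M \<longleftrightarrow> x = Root \<and> u \<in> A"
  by (auto simp: zk_edges_def)

lemma trancl_last_edge:
  assumes "(a, z) \<in> R\<^sup>+"
  obtains y where "(y, z) \<in> R" "y = a \<or> (a, y) \<in> R\<^sup>+"
  using tranclD2[OF assms] by (auto simp: rtrancl_eq_or_trancl)

lemma zk_path_to_terminal:
  assumes sub: "F \<subseteq> zk_edges A B EH K M" and path: "(Root, VT t) \<in> F\<^sup>+"
  obtains u v where "(Root, VA u) \<in> F" "(VA u, VB v) \<in> F" "(VB v, VBp v) \<in> F" "(VBp v, VT t) \<in> F"
proof -
  obtain x where x: "(x, VT t) \<in> F" "x = Root \<or> (Root, x) \<in> F\<^sup>+"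
    using path by (rule trancl_last_edge)
  then obtain v where "x = VBp v"
    using subsetD[OF sub x(1)] by (auto simp: zk_edge_into_VT_iff)
  with x have v: "(VBp v, VT t) \<in> F" "(Root, VBp v) \<in> F\<^sup>+"
    by auto
  obtain y where y: "(y, VBp v) \<in> F" "y = Root \<or> (Root, y) \<in> F\<^sup>+"
    using v(2) by (rule trancl_last_edge)
  then have "y = VB v"
    using subsetD[OF sub y(1)] by (auto simp: zk_edge_into_VBp_iff)
  with y have bv: "(VB v, VBp v) \<in> F" "(Root, VB v) \<in> F\<^sup>+"
    by auto
  obtain z where z: "(z, VB v) \<in> F" "z = Root \<or> (Root, z) \<in> F\<^sup>+"
    using bv(2) by (rule trancl_last_edge)
  then obtain u where "z = VA u"
    using subsetD[OF sub z(1)] by (auto simp: zk_edge_into_VB_iff)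
  with z have u: "(VA u, VB v) \<in> F" "(Root, VA u) \<in> F\<^sup>+"
    by auto
  obtain w where w: "(w, VA u) \<in> F"
    using u(2) by (rule trancl_last_edge)
  then have "w = Root"
    using subsetD[OF sub w] by (auto simp: zk_edge_into_VA_iff)
  with w show thesis
    using that u(1) bv(1) v(1) by blast
qed

lemma card_le_cover_by_families:
  fixes a b :: real
  assumes "finite U" "finite V" "S \<subseteq> (\<Union>u \<in> U. X u) \<union> (\<Union>v \<in> V. Y v)"
    and "\<And>u. u \<in> U \<Longrightarrow> finite (X u) \<and> real (card (X u)) \<le> a"
    and "\<And>v. v \<in> V \<Longrightarrow> finite (Y v) \<and> real (card (Y v)) \<le> b"
  shows "real (card S) \<le> real (card U) * a + real (card V) * b"
proof -
  have "card S \<le> card ((\<Union>u \<in> U. X u) \<union> (\<Union>v \<in> V. Y v))"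
    using assms by (intro card_mono) auto
  also have "\<dots> \<le> card (\<Union>u \<in> U. X u) + card (\<Union>v \<in> V. Y v)"
    by (rule card_Un_le)
  also have "\<dots> \<le> (\<Sum>u \<in> U. card (X u)) + (\<Sum>v \<in> V. card (Y v))"
    using assms(1,2) by (intro add_mono card_UN_le)
  finally have "real (card S) \<le> (\<Sum>u \<in> U. real (card (X u))) + (\<Sum>v \<in> V. real (card (Y v)))"
    by (simp flip: of_nat_sum of_nat_add)
  also have "\<dots> \<le> (\<Sum>u \<in> U. a) + (\<Sum>v \<in> V. b)"
    using assms(4,5) by (intro add_mono sum_mono) auto
  finally show ?thesis
    by (simp add: mult.commute)
qed

lemma zk_terminals_covered:
  assumes sub: "F \<subseteq> zk_edges A B EH K M" and conn: "\<forall>t \<in> K. (Root, VT t) \<in> F\<^sup>+"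
    and g: "\<And>u v. (Root, VA u) \<in> F \<Longrightarrow> (VA u, VB v) \<in> F \<Longrightarrow>
              (Root, VA (g v)) \<in> F \<and> (VA (g v), VB v) \<in> F"
  shows "K \<subseteq> (\<Union>u \<in> {u. (Root, VA u) \<in> F}. J u) \<union>
           (\<Union>v \<in> {v. (VB v, VBp v) \<in> F \<and> (VA (g v), VB v) \<in> F}. zk_Kv K M v - J (g v))"
proof
  fix t
  assume "t \<in> K"
  then obtain u v where uv: "(Root, VA u) \<in> F" "(VA u, VB v) \<in> F" "(VB v, VBp v) \<in> F"
      "(VBp v, VT t) \<in> F"
    using sub conn zk_path_to_terminal by metis
  have "t \<in> zk_Kv K M v"
    using subsetD[OF sub uv(4)] by (simp add: zk_edge_into_VT_iff)
  then show "t \<in> (\<Union>u \<in> {u. (Root, VA u) \<in> F}. J u) \<union>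
      (\<Union>v \<in> {v. (VB v, VBp v) \<in> F \<and> (VA (g v), VB v) \<in> F}. zk_Kv K M v - J (g v))"
    using g[OF uv(1,2)] uv(3) by blast
qed

lemma zk_terminal_count_bound:
  assumes inst: "zk_instance A B EH d d' K k M s" and alpha: "\<alpha> > 0"
    and J: "\<forall>u \<in> A. \<exists>J \<subseteq> K. real (card J) \<le> real d / \<alpha> \<and>
              (\<forall>v. (u, v) \<in> EH \<longrightarrow> real (card (zk_Kv K M v - J)) \<le> real d' / \<alpha>)"
    and sub: "F \<subseteq> zk_edges A B EH K M" and conn: "\<forall>t \<in> K. (Root, VT t) \<in> F\<^sup>+"
  shows "\<alpha> * real k \<le>
    real (card {u. (Root, VA u) \<in> F}) * real d + real (card {v. (VB v, VBp v) \<in> F}) * real d'"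
proof -
  have fin: "finite A" "finite B" "finite K" and k: "card K = k"
    using inst by (simp_all add: zk_instance_def)
  obtain Jf where Jf: "\<forall>u \<in> A. Jf u \<subseteq> K \<and> real (card (Jf u)) \<le> real d / \<alpha> \<and>
      (\<forall>v. (u, v) \<in> EH \<longrightarrow> real (card (zk_Kv K M v - Jf u)) \<le> real d' / \<alpha>)"
    using bchoice[OF J] by blast
  define g where "g v = (SOME u. (Root, VA u) \<in> F \<and> (VA u, VB v) \<in> F)" for v
  have g: "(Root, VA (g v)) \<in> F \<and> (VA (g v), VB v) \<in> F"
    if "(Root, VA u) \<in> F" "(VA u, VB v) \<in> F" for u v
    unfolding g_def using that by (metis (mono_tags, lifting) someI)
  define A' where "A' = {u. (Root, VA u) \<in> F}"
  define B' where "B' = {v. (VB v, VBp v) \<in> F}"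
  define B'' where "B'' = {v. (VB v, VBp v) \<in> F \<and> (VA (g v), VB v) \<in> F}"
  have A': "A' \<subseteq> A"
    using sub by (auto simp: A'_def zk_edge_into_VA_iff)
  have B': "B' \<subseteq> B"
    using sub by (auto simp: B'_def zk_edge_into_VBp_iff)
  have B'': "B'' \<subseteq> B'" "\<And>v. v \<in> B'' \<Longrightarrow> g v \<in> A \<and> (g v, v) \<in> EH"
    using sub by (auto simp: B''_def B'_def zk_edge_into_VB_iff)
  have "real (card K) \<le> real (card A') * (real d / \<alpha>) + real (card B'') * (real d' / \<alpha>)"
  proof (rule card_le_cover_by_families)
    show "K \<subseteq> (\<Union>u \<in> A'. Jf u) \<union> (\<Union>v \<in> B''. zk_Kv K M v - Jf (g v))"
      unfolding A'_def B''_def using sub conn g by (rule zk_terminals_covered)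
    show "finite (Jf u) \<and> real (card (Jf u)) \<le> real d / \<alpha>" if "u \<in> A'" for u
      using that A' Jf fin(3) by (meson finite_subset subsetD)
    show "finite (zk_Kv K M v - Jf (g v)) \<and> real (card (zk_Kv K M v - Jf (g v))) \<le> real d' / \<alpha>"
      if "v \<in> B''" for v
      using B''(2)[OF that] Jf fin(3) by (simp add: zk_Kv_def)
  qed (use A' B' B''(1) fin in \<open>auto intro: finite_subset\<close>)
  also have "\<dots> \<le> real (card A') * (real d / \<alpha>) + real (card B') * (real d' / \<alpha>)"
    using B''(1) B' fin(2) alpha
    by (intro add_left_mono mult_right_mono) (auto intro: card_mono finite_subset)
  finally show ?thesis
    using alpha k by (simp add: A'_def B'_def field_simps)
qed

lemma finite_zk_edges:
  assumes "finite A" "finite B" "finite K"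
  shows "finite (zk_edges A B EH K M)"
proof (rule finite_subset)
  show "zk_edges A B EH K M \<subseteq> (\<lambda>u. (Root, VA u)) ` A \<union> (\<lambda>(u, v). (VA u, VB v)) ` (A \<times> B)
      \<union> (\<lambda>v. (VB v, VBp v)) ` B \<union> (\<lambda>(v, t). (VBp v, VT t)) ` (B \<times> K)"
    by (auto simp: zk_edges_def zk_Kv_def image_iff)
qed (use assms in auto)

lemma zk_cost_nonneg: "zk_cost A B e \<ge> 0"
  by (cases "(A, B, e)" rule: zk_cost.cases) auto

lemma zk_cost_lower_bound:
  fixes A :: "'a set" and B :: "'b set"
    and F :: "(('a, 'b, 't) zk_vertex \<times> ('a, 'b, 't) zk_vertex) set"
  assumes "finite F"
  shows "real (card {u. (Root, VA u) \<in> F}) * real (card B) / real (card A)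
           + real (card {v. (VB v, VBp v) \<in> F}) \<le> (\<Sum>e \<in> F. zk_cost A B e)"
proof -
  define F1 :: "(('a, 'b, 't) zk_vertex \<times> ('a, 'b, 't) zk_vertex) set"
    where "F1 = (\<lambda>u. (Root, VA u)) ` {u. (Root, VA u) \<in> F}"
  define F3 :: "(('a, 'b, 't) zk_vertex \<times> ('a, 'b, 't) zk_vertex) set"
    where "F3 = (\<lambda>v. (VB v, VBp v)) ` {v. (VB v, VBp v) \<in> F}"
  have F13: "F1 \<subseteq> F" "F3 \<subseteq> F" "F1 \<inter> F3 = {}"
    by (auto simp: F1_def F3_def)
  have "(\<Sum>e \<in> F1. zk_cost A B e) = real (card {u. (Root, VA u) \<in> F}) * real (card B) / real (card A)"
    by (simp add: F1_def sum.reindex inj_on_def)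
  moreover have "(\<Sum>e \<in> F3. zk_cost A B e) = real (card {v. (VB v, VBp v) \<in> F})"
    by (simp add: F3_def sum.reindex inj_on_def)
  moreover have "(\<Sum>e \<in> F1 \<union> F3. zk_cost A B e)
      = (\<Sum>e \<in> F1. zk_cost A B e) + (\<Sum>e \<in> F3. zk_cost A B e)"
    using F13 assms by (intro sum.union_disjoint) (auto intro: finite_subset)
  moreover have "(\<Sum>e \<in> F1 \<union> F3. zk_cost A B e) \<le> (\<Sum>e \<in> F. zk_cost A B e)"
    using F13 assms by (intro sum_mono2) (auto simp: zk_cost_nonneg)
  ultimately show ?thesis
    by simp
qed

lemma cost_bound_from_count_bound:
  fixes \<alpha> a b d d' k s nA nB :: real
  assumes "\<alpha> * k \<le> a * d + b * d'" "d * nA = s * k" "d' * nB = s * k" "s > 0" "nA > 0" "d' > 0"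
  shows "\<alpha> * nB / s \<le> a * nB / nA + b"
proof -
  have "nB / s = k / d'" "nB / nA = d / d'"
    using assms(2-6) by (simp_all add: field_simps)
  then have "\<alpha> * nB / s = \<alpha> * k / d'" and "a * nB / nA + b = a * d / d' + b"
    by (metis times_divide_eq_right)+
  moreover have "\<alpha> * k / d' \<le> (a * d + b * d') / d'"
    using assms(1,6) by (simp add: divide_right_mono)
  moreover have "(a * d + b * d') / d' = a * d / d' + b"
    using assms(6) by (simp add: field_simps)
  ultimately show ?thesis
    by simp
qed

theorem lemma3p1:
  fixes A :: "'a set" and B :: "'b set" and EH :: "('a \<times> 'b) set"
    and K :: "'t set" and M :: "'t \<Rightarrow> ('a \<times> 'b) set"
    and d d' k s :: nat and \<alpha> :: real
    and F :: "(('a, 'b, 't) zk_vertex \<times> ('a, 'b, 't) zk_vertex) set"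
  assumes inst: "zk_instance A B EH d d' K k M s"
    and K_ne: "K \<noteq> {}"
    and alpha: "\<alpha> \<ge> 1"
    and J: "\<forall>u \<in> A. \<exists>J \<subseteq> K. real (card J) \<le> real d / \<alpha> \<and>
              (\<forall>v. (u, v) \<in> EH \<longrightarrow> real (card (zk_Kv K M v - J)) \<le> real d' / \<alpha>)"
    and sub: "F \<subseteq> zk_edges A B EH K M"
    and conn: "\<forall>t \<in> K. (Root, VT t) \<in> F\<^sup>+"
  shows "(\<Sum>e \<in> F. zk_cost A B e) \<ge> \<alpha> * real (card B) / real s"
proof (cases "s = 0")
  case True
  \<comment> \<open>the bound degenerates to 0 since \<open>x / 0 = 0\<close>\<close>
  then show ?thesis
    by (simp add: sum_nonneg zk_cost_nonneg)
next
  case False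
  let ?a = "real (card {u. (Root, VA u) \<in> F})" and ?b = "real (card {v. (VB v, VBp v) \<in> F})"
  have fin: "finite A" "finite B" "finite K" and "card K = k"
    using inst by (simp_all add: zk_instance_def)
  then have "s * k > 0"
    using False K_ne by auto
  moreover note counting = zk_instance_double_counting[OF inst]
  ultimately have "card A > 0" "d' > 0"
    by (metis mult_eq_0_iff neq0_conv)+
  have "finite F"
    using sub finite_zk_edges[OF fin] by (rule finite_subset)
  then have "?a * real (card B) / real (card A) + ?b \<le> (\<Sum>e \<in> F. zk_cost A B e)"
    by (rule zk_cost_lower_bound)
  moreover have "\<alpha> * real (card B) / real s \<le> ?a * real (card B) / real (card A) + ?b"
  proof (rule cost_bound_from_count_bound)
    show "\<alpha> * real k \<le> ?a * real d + ?b * real d'"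
      using alpha by (intro zk_terminal_count_bound[OF inst _ J sub conn]) simp
  qed (use counting False \<open>card A > 0\<close> \<open>d' > 0\<close> in \<open>simp_all flip: of_nat_mult\<close>)
  ultimately show ?thesis
    by linarith
qed

end
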